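(* Let $(x_n)$ be a nonincreasing interval-filling sequence of positive reals with cardinal function $f$, and suppose $r_k>x_k$ for some $k\in\mathbb{N}$. Then there exists $x\in\mathcal{A}((x_n))$ with $f(x)\ge3$ (with $\omega,\mathfrak{c}$ counting as $\ge3$).
   Context: For a summable sequence $\mathbf{x}=(x_n)$ of positive reals, $\mathcal{A}(\mathbf{x})=\{\sum_{n\in A}x_n: A\subseteq\mathbb{N}\}$ is its achievement set and its cardinal function $f$ assigns to $x\in\mathcal{A}(\mathbf{x})$ the cardinality (a positive integer, $\omega$, or $\mathfrak{c}$) of $\{(\varepsilon_n)\in\{0,1\}^{\mathbb{N}}:\sum\varepsilon_nx_n=x\}$. The sequence is interval-filling if $\mathcal{A}(\mathbf{x})$ is an interval. The tail sums are $r_n=\sum_{k=n+1}^\infty x_k$. *)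

theory Defs
  imports "HOL-Analysis.Analysis"
begin

text \<open>Sequences are indexed from 0 (the paper indexes from 1; this is a harmless shift).
  A 0-1 sequence is encoded as a predicate e :: nat \<Rightarrow> bool.\<close>

definition subsum :: "(nat \<Rightarrow> real) \<Rightarrow> (nat \<Rightarrow> bool) \<Rightarrow> real" where
  "subsum x e = (\<Sum>n. if e n then x n else 0)"

definition achievement_set :: "(nat \<Rightarrow> real) \<Rightarrow> real set" where
  "achievement_set x = {subsum x e | e. True}"

text \<open>The set of 0-1 representations of a point; the cardinal function f(s) is its cardinality.\<close>
definition representations :: "(nat \<Rightarrow> real) \<Rightarrow> real \<Rightarrow> (nat \<Rightarrow> bool) set" where
  "representations x s = {e. subsum x e = s}"

definition interval_filling :: "(nat \<Rightarrow> real) \<Rightarrow> bool" where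
  "interval_filling x \<longleftrightarrow> is_interval (achievement_set x)"

definition tail_sum :: "(nat \<Rightarrow> real) \<Rightarrow> nat \<Rightarrow> real" where
  "tail_sum x k = (\<Sum>j. x (j + k + 1))"

end

theory Submission
  imports Defs
begin

text \<open>By Kakeya's criterion, a nonincreasing interval-filling sequence satisfies \<open>x\<^sub>j \<le> r\<^sub>j\<close>
  for every \<open>j\<close>, so the greedy algorithm represents every \<open>t \<in> [0, r\<^sub>n]\<close> using only indices
  beyond \<open>n\<close>. Given \<open>r\<^sub>k > x\<^sub>k\<close>, choose \<open>m > k\<close> with \<open>x\<^sub>m < r\<^sub>k - x\<^sub>k\<close> and put \<open>s = x\<^sub>k + x\<^sub>m\<close>.
  Then \<open>s\<close> has the three representations \<open>{k, m}\<close>, \<open>{k} \<union> G\<close> with \<open>G\<close> a greedy representation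
  of \<open>x\<^sub>m\<close> beyond \<open>m\<close>, and a greedy representation of \<open>s \<le> r\<^sub>k\<close> beyond \<open>k\<close>; they differ at
  \<open>m\<close> and at \<open>k\<close>.\<close>

lemma tail_sum_eq:
  assumes "summable x"
  shows "tail_sum x n = suminf x - (\<Sum>i<Suc n. x i)"
  using suminf_minus_initial_segment[OF assms, of "Suc n"] by (simp add: tail_sum_def)

lemma tail_sum_Suc:
  assumes "summable x"
  shows "tail_sum x n = x (Suc n) + tail_sum x (Suc n)"
  using tail_sum_eq[OF assms, of n] tail_sum_eq[OF assms, of "Suc n"] by simp

lemma tail_sum_tendsto_zero:
  assumes "summable x"
  shows "tail_sum x \<longlonglongrightarrow> 0"
proof -
  have "(\<lambda>n. \<Sum>i<Suc n. x i) \<longlonglongrightarrow> suminf x"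
    using LIMSEQ_Suc[OF summable_LIMSEQ[OF assms]] .
  then have "(\<lambda>n. suminf x - (\<Sum>i<Suc n. x i)) \<longlonglongrightarrow> suminf x - suminf x"
    by (intro tendsto_intros)
  moreover have "tail_sum x = (\<lambda>n. suminf x - (\<Sum>i<Suc n. x i))"
    using tail_sum_eq[OF assms] by blast
  ultimately show ?thesis
    by simp
qed

primrec greedy_psum :: "(nat \<Rightarrow> real) \<Rightarrow> nat \<Rightarrow> real \<Rightarrow> nat \<Rightarrow> real" where
  "greedy_psum x n t 0 = 0"
| "greedy_psum x n t (Suc i) = greedy_psum x n t i +
     (if n < i \<and> greedy_psum x n t i + x i \<le> t then x i else 0)"

lemma greedy_psum_le:
  assumes "0 \<le> t"
  shows "greedy_psum x n t i \<le> t"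
  using assms by (induction i) auto

lemma greedy_psum_eq_0:
  assumes "i \<le> Suc n"
  shows "greedy_psum x n t i = 0"
  using assms by (induction i) auto

text \<open>When \<open>x\<^sub>j\<close> is skipped, the uncovered part of \<open>t\<close> is below \<open>x\<^sub>j \<le> r\<^sub>j\<close>.\<close>

lemma greedy_psum_gap:
  assumes summ: "summable x"
    and le_tail: "\<And>j. n < j \<Longrightarrow> x j \<le> tail_sum x j"
    and t: "t \<le> tail_sum x n"
    and "n \<le> j"
  shows "t - greedy_psum x n t (Suc j) \<le> tail_sum x j"
  using \<open>n \<le> j\<close>
proof (induction j rule: dec_induct)
  case base
  then show ?case using t by (simp add: greedy_psum_eq_0)
next
  case (step j)
  then show ?case
    using tail_sum_Suc[OF summ, of j] le_tail[of "Suc j"] by auto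
qed

lemma greedy_psum_tendsto:
  assumes summ: "summable x"
    and le_tail: "\<And>j. n < j \<Longrightarrow> x j \<le> tail_sum x j"
    and t: "0 \<le> t" "t \<le> tail_sum x n"
  shows "greedy_psum x n t \<longlonglongrightarrow> t"
proof -
  have "(\<lambda>j. t - greedy_psum x n t (Suc j)) \<longlonglongrightarrow> 0"
  proof (rule tendsto_sandwich[OF _ _ tendsto_const tail_sum_tendsto_zero[OF summ]])
    show "\<forall>\<^sub>F j in sequentially. 0 \<le> t - greedy_psum x n t (Suc j)"
      using greedy_psum_le[OF t(1)] by simp
    show "\<forall>\<^sub>F j in sequentially. t - greedy_psum x n t (Suc j) \<le> tail_sum x j"
      using eventually_ge_at_top[of n]
      by eventually_elim (rule greedy_psum_gap[OF summ le_tail t(2)])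
  qed
  then have "(\<lambda>j. t - (t - greedy_psum x n t (Suc j))) \<longlonglongrightarrow> t - 0"
    by (intro tendsto_intros)
  then have "(\<lambda>j. greedy_psum x n t (Suc j)) \<longlonglongrightarrow> t"
    by simp
  then show ?thesis
    by (rule LIMSEQ_imp_Suc)
qed

lemma greedy_representation:
  assumes summ: "summable x"
    and le_tail: "\<And>j. n < j \<Longrightarrow> x j \<le> tail_sum x j"
    and t: "0 \<le> t" "t \<le> tail_sum x n"
  obtains e where "\<And>i. i \<le> n \<Longrightarrow> \<not> e i" and "(\<lambda>i. if e i then x i else 0) sums t"
proof
  define e where "e i \<longleftrightarrow> n < i \<and> greedy_psum x n t i + x i \<le> t" for i
  show "\<not> e i" if "i \<le> n" for i
    using that by (simp add: e_def)
  have "(\<Sum>j<i. if e j then x j else 0) = greedy_psum x n t i" for i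
    by (induction i) (simp_all add: e_def)
  then show "(\<lambda>i. if e i then x i else 0) sums t"
    unfolding sums_def using greedy_psum_tendsto[OF assms] by (simp only:)
qed

lemma summable_selection:
  fixes x :: "nat \<Rightarrow> real"
  assumes "\<And>n. 0 \<le> x n" and "summable x"
  shows "summable (\<lambda>i. if e i then x i else 0)"
  using assms(1) by (intro summable_comparison_test[OF _ assms(2)]) auto

lemma achievement_set_gap:
  assumes nonneg: "\<And>n. 0 \<le> x n" and summ: "summable x" and noninc: "decseq x"
    and s: "s \<in> achievement_set x"
  shows "s \<le> tail_sum x n \<or> x n \<le> s"
proof -
  obtain e where s_eq: "s = (\<Sum>i. if e i then x i else 0)"
    using s by (auto simp: achievement_set_def subsum_def)
  define f where "f i = (if e i then x i else 0)" for i
  have f_summ: "summable f" and f_nonneg: "\<And>i. 0 \<le> f i"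
    using summable_selection[OF nonneg summ, of e] nonneg by (simp_all add: f_def[abs_def])
  have s_f: "s = suminf f"
    by (simp add: s_eq f_def[abs_def])
  show ?thesis
  proof (cases "\<exists>i\<le>n. e i")
    case True
    then obtain i where "i \<le> n" "e i" by blast
    then have "x n \<le> f i"
      using noninc by (simp add: f_def decseq_def)
    also have "f i \<le> suminf f"
      using sum_le_suminf[OF f_summ, of "{i}"] f_nonneg by simp
    finally show ?thesis by (simp add: s_f)
  next
    case False
    then have "(\<Sum>i<Suc n. f i) = 0"
      by (simp add: f_def)
    then have "suminf f = (\<Sum>j. f (j + Suc n))"
      using suminf_minus_initial_segment[OF f_summ, of "Suc n"] by simp
    also have "\<dots> \<le> (\<Sum>j. x (j + Suc n))"
    proof (rule suminf_le)
      show "summable (\<lambda>j. f (j + Suc n))"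
        by (rule summable_ignore_initial_segment[OF f_summ])
      show "summable (\<lambda>j. x (j + Suc n))"
        by (rule summable_ignore_initial_segment[OF summ])
    qed (simp add: f_def nonneg)
    finally show ?thesis by (simp add: s_f tail_sum_def)
  qed
qed

text \<open>The easy half of Kakeya's criterion: a point of the gap \<open>(r\<^sub>n, x\<^sub>n)\<close> would lie between
  the sums \<open>0\<close> and \<open>\<Sum> x\<close> of the achievement set.\<close>

lemma interval_filling_le_tail_sum:
  assumes nonneg: "\<And>n. 0 \<le> x n" and summ: "summable x" and noninc: "decseq x"
    and ifill: "interval_filling x"
  shows "x n \<le> tail_sum x n"
proof (rule ccontr)
  assume "\<not> x n \<le> tail_sum x n"
  define c where "c = (x n + tail_sum x n) / 2"
  have "0 \<in> achievement_set x" "suminf x \<in> achievement_set x"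
    unfolding achievement_set_def subsum_def
    by (force intro: exI[of _ "\<lambda>_. False"], force intro: exI[of _ "\<lambda>_. True"])
  moreover have "0 \<le> tail_sum x n"
    using sum_le_suminf[OF summ, of "{..<Suc n}"] nonneg by (simp add: tail_sum_eq[OF summ])
  moreover have "x n \<le> suminf x"
    using sum_le_suminf[OF summ, of "{n}"] nonneg by simp
  ultimately have "0 \<le> c" "c \<le> suminf x"
    using \<open>\<not> x n \<le> tail_sum x n\<close> by (simp_all add: c_def)
  then have "c \<in> achievement_set x"
    using ifill \<open>0 \<in> achievement_set x\<close> \<open>suminf x \<in> achievement_set x\<close>
    unfolding interval_filling_def is_interval_1 by blast
  then show False
    using achievement_set_gap[OF nonneg summ noninc, of c n] \<open>\<not> x n \<le> tail_sum x n\<close>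
    by (simp add: c_def)
qed

lemma sums_selection_upd:
  fixes x :: "nat \<Rightarrow> 'a::real_normed_vector"
  assumes "(\<lambda>i. if e i then x i else 0) sums t" and "\<not> e k"
  shows "(\<lambda>i. if (e(k := True)) i then x i else 0) sums (x k + t)"
proof -
  have "(\<lambda>i. (if i = k then x i else 0) + (if e i then x i else 0)) sums (x k + t)"
    by (intro sums_add sums_single assms(1))
  moreover have "(\<lambda>i. (if i = k then x i else 0) + (if e i then x i else 0)) =
      (\<lambda>i. if (e(k := True)) i then x i else 0)"
    using assms(2) by auto
  ultimately show ?thesis
    by simp
qed

lemma sums_selection_in_representations:
  "(\<lambda>i. if e i then x i else 0) sums s \<Longrightarrow> e \<in> representations x s"
  by (simp add: representations_def subsum_def sums_iff)

lemma infinite_or_card_ge_3: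
  assumes "{a, b, c} \<subseteq> A" and "a \<noteq> b" "a \<noteq> c" "b \<noteq> c"
  shows "infinite A \<or> card A \<ge> 3"
  using card_mono[OF _ assms(1)] assms(2-4) by auto

lemma in_achievement_set_iff: "s \<in> achievement_set x \<longleftrightarrow> representations x s \<noteq> {}"
  by (auto simp: achievement_set_def representations_def)

lemma infinite_or_card_representations_ge_3:
  assumes nonneg: "\<And>n. 0 \<le> x n" and summ: "summable x"
    and le_tail: "\<And>j. k < j \<Longrightarrow> x j \<le> tail_sum x j"
    and "k < m" and pair_le: "x k + x m \<le> tail_sum x k"
  shows "infinite (representations x (x k + x m)) \<or> card (representations x (x k + x m)) \<ge> 3"
proof -
  have le_tail_m: "\<And>j. m < j \<Longrightarrow> x j \<le> tail_sum x j"
    using le_tail \<open>k < m\<close> by simp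
  obtain g where g_tail: "\<And>i. i \<le> m \<Longrightarrow> \<not> g i"
    and g: "(\<lambda>i. if g i then x i else 0) sums x m"
    using greedy_representation[OF summ le_tail_m nonneg[of m] le_tail[OF \<open>k < m\<close>]] by blast
  have "0 \<le> x k + x m"
    using nonneg[of k] nonneg[of m] by simp
  then obtain h where h_tail: "\<And>i. i \<le> k \<Longrightarrow> \<not> h i"
    and h: "(\<lambda>i. if h i then x i else 0) sums (x k + x m)"
    using greedy_representation[OF summ le_tail _ pair_le] by blast
  define e\<^sub>1 where "e\<^sub>1 = (\<lambda>i. i = m)(k := True)"
  define e\<^sub>2 where "e\<^sub>2 = g(k := True)"
  have "{e\<^sub>1, e\<^sub>2, h} \<subseteq> representations x (x k + x m)"
  proof (intro insert_subsetI empty_subsetI sums_selection_in_representations)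
    show "(\<lambda>i. if e\<^sub>1 i then x i else 0) sums (x k + x m)"
      using sums_selection_upd[OF sums_single[of m x], of k] \<open>k < m\<close> by (simp add: e\<^sub>1_def)
    show "(\<lambda>i. if e\<^sub>2 i then x i else 0) sums (x k + x m)"
      using sums_selection_upd[OF g, of k] \<open>k < m\<close> g_tail by (simp add: e\<^sub>2_def)
  qed (rule h)
  moreover have "e\<^sub>1 m \<noteq> e\<^sub>2 m" "e\<^sub>1 k \<noteq> h k" "e\<^sub>2 k \<noteq> h k"
    using \<open>k < m\<close> g_tail h_tail by (simp_all add: e\<^sub>1_def e\<^sub>2_def)
  ultimately show ?thesis
    by (intro infinite_or_card_ge_3) auto
qed

theorem lemma3p7:
  fixes x :: "nat \<Rightarrow> real"
  assumes pos: "\<And>n. x n > 0"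
    and summ: "summable x"
    and noninc: "decseq x"
    and ifill: "interval_filling x"
    and k: "\<exists>k. tail_sum x k > x k"
  shows "\<exists>s \<in> achievement_set x.
           infinite (representations x s) \<or> card (representations x s) \<ge> 3"
proof -
  have le_tail: "\<And>j. x j \<le> tail_sum x j"
    using interval_filling_le_tail_sum[OF less_imp_le[OF pos] summ noninc ifill] .
  obtain k where "x k < tail_sum x k"
    using k by blast
  moreover have "\<forall>\<^sub>F m in sequentially. k < m \<and> x m < tail_sum x k - x k"
    using eventually_gt_at_top[of k] order_tendstoD(2)[OF summable_LIMSEQ_zero[OF summ]]
      \<open>x k < tail_sum x k\<close> by (auto intro: eventually_conj)
  ultimately obtain m where "k < m" and "x m < tail_sum x k - x k"
    using eventually_happens'[OF sequentially_bot] by blast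
  then have "infinite (representations x (x k + x m)) \<or> card (representations x (x k + x m)) \<ge> 3"
    by (intro infinite_or_card_representations_ge_3[OF less_imp_le[OF pos] summ le_tail]) simp_all
  moreover from this have "x k + x m \<in> achievement_set x"
    by (auto simp: in_achievement_set_iff)
  ultimately show ?thesis
    by blast
qed

end
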